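(* Let $\mathbf b=\sum_{j=1}^mv_j\mathbf a_j\in\mathcal B$ ($v_j\in[0,1)$) and $u\in M$ with $u-\mathbf b\in\mathbb ZA_+$. Let $\sigma_{\mathbf b}$ be the smallest closed face of $C(A)$ containing $\mathbf b$, and suppose $\sigma_{\mathbf b}\neq C(A)$. Then $G^{(\mathbf b)}_u(\lambda)$ is a nonzero constant if and only if $u=\mathbf b+\sum_{\{j:\mathbf a_j\in\sigma_{\mathbf b}\}}t_j\mathbf a_j$ for (unique) $t_j\in\mathbb Z_{\ge0}$, in which case \[G^{(\mathbf b)}_u(\lambda)=\Big(\prod_{\{j:\mathbf a_j\in\sigma_{\mathbf b}\}}\ell_j^{-t_j}\Big)\Big(\prod_{\{j:\mathbf a_j\in\sigma_{\mathbf b}\}}[-v_j]_{-t_j}\Big).\] If $u$ is not of this form, then $G^{(\mathbf b)}_u(\lambda)=0$.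
   Context: Let $A=\{\mathbf a_1,\dots,\mathbf a_m\}\subseteq\mathbb Z^n$ be linearly independent over $\mathbb R$, $\mathbf a_0\in\mathbb Z^n$, and $\ell_0,\dots,\ell_m$ positive integers with gcd $1$, $\ell_0\mathbf a_0=\sum_{j=1}^m\ell_j\mathbf a_j$, $\ell_0=\sum_{j=1}^m\ell_j$. Let $\mathbb ZA_+$ be the group generated by $A\cup\{\mathbf a_0\}$. Let $V$ be the real span of $A$, $V_{\mathbb Z}=V\cap\mathbb Z^n$, $C(A)$ the closed real cone generated by $A$, $M=V_{\mathbb Z}\cap C(A)$, $P(A)=\{\sum_jc_j\mathbf a_j:0\le c_j<1\}$, $\mathcal B=V_{\mathbb Z}\cap P(A)$. For $z\in\mathbb C$, $l\in\mathbb Z$: $[z]_0=1$, $[z]_l=1/((z+1)\cdots(z+l))$ for $l>0$, $[z]_l=z(z-1)\cdots(z+l+1)$ for $l<0$. For $\mathbf b=\sum_jv_j\mathbf a_j\in\mathcal B$ and $w\in M$, let $g^{(\mathbf b)}_w=\prod_j[-v_j]_{s_j}\ell_j^{s_j}$ if $w=\sum_j(v_j-s_j)\mathbf a_j$ with all $s_j\in\mathbb Z_{\le0}$, and $0$ otherwise; and $G^{(\mathbf b)}_u(\lambda)=\sum_{s\ge0}g^{(\mathbf b)}_{u+s\mathbf a_0}\frac{(-\ell_0\lambda)^s}{s!}\in\mathbb C[[\lambda]]$. *)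

theory Defs
  imports "HOL-Analysis.Analysis" "HOL-Computational_Algebra.Formal_Power_Series"
begin

text \<open>The vectors a_1,...,a_m are given as a function a on indices 1..m (a 0 is the extra
vector a_0); the ambient space is real^'n and integrality is stated coordinatewise.\<close>

definition int_vec :: "real ^ 'n \<Rightarrow> bool" where
  "int_vec x \<longleftrightarrow> (\<forall>i. x $ i \<in> \<int>)"

definition coneA :: "(nat \<Rightarrow> real ^ 'n) \<Rightarrow> nat \<Rightarrow> (real ^ 'n) set" where
  "coneA a m = {x. \<exists>c::nat \<Rightarrow> real. (\<forall>j\<in>{1..m}. c j \<ge> 0) \<and> x = (\<Sum>j=1..m. c j *\<^sub>R a j)}"

definition MA :: "(nat \<Rightarrow> real ^ 'n) \<Rightarrow> nat \<Rightarrow> (real ^ 'n) set" where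
  "MA a m = {x. x \<in> span (a ` {1..m}) \<and> int_vec x \<and> x \<in> coneA a m}"

definition ZAplus :: "(nat \<Rightarrow> real ^ 'n) \<Rightarrow> nat \<Rightarrow> (real ^ 'n) set" where
  "ZAplus a m = {x. \<exists>k::nat \<Rightarrow> int. x = (\<Sum>j=0..m. of_int (k j) *\<^sub>R a j)}"

definition bracket :: "complex \<Rightarrow> int \<Rightarrow> complex" where
  "bracket z l = (if l = 0 then 1
     else if l > 0 then 1 / (\<Prod>i=1..nat l. z + of_nat i)
     else (\<Prod>i<nat (- l). z - of_nat i))"

definition gcoef :: "(nat \<Rightarrow> real ^ 'n) \<Rightarrow> nat \<Rightarrow> (nat \<Rightarrow> nat) \<Rightarrow> (nat \<Rightarrow> real)
    \<Rightarrow> real ^ 'n \<Rightarrow> complex" where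
  "gcoef a m l v w =
    (if \<exists>s::nat \<Rightarrow> int. (\<forall>j\<in>{1..m}. s j \<le> 0) \<and> w = (\<Sum>j=1..m. (v j - of_int (s j)) *\<^sub>R a j)
     then (let s = (SOME s::nat \<Rightarrow> int. (\<forall>j\<in>{1..m}. s j \<le> 0) \<and>
                      w = (\<Sum>j=1..m. (v j - of_int (s j)) *\<^sub>R a j))
           in (\<Prod>j=1..m. bracket (- complex_of_real (v j)) (s j) * (of_nat (l j)) powi (s j)))
     else 0)"

definition Gser :: "(nat \<Rightarrow> real ^ 'n) \<Rightarrow> nat \<Rightarrow> (nat \<Rightarrow> nat) \<Rightarrow> (nat \<Rightarrow> real)
    \<Rightarrow> real ^ 'n \<Rightarrow> complex fps" where
  "Gser a m l v u = Abs_fps (\<lambda>s. gcoef a m l v (u + of_nat s *\<^sub>R a 0)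
      * (- of_nat (l 0)) ^ s / fact s)"

definition min_closed_face :: "'a::real_normed_vector set \<Rightarrow> 'a \<Rightarrow> 'a set" where
  "min_closed_face S x = \<Inter>{F. F face_of S \<and> closed F \<and> x \<in> F}"

end

theory Submission
  imports Defs
begin

text \<open>Since a_1, ..., a_m are linearly independent, C(A) is a simplicial cone: the coordinates
  of a point of the span are read off by a dual family of vectors. The smallest closed face of
  C(A) through b = \<Sum> v_j a_j is then the cone on the a_j with v_j \<noteq> 0, cut out by the
  supporting hyperplane on which the sum of the coordinates with v_j = 0 vanishes; so properness
  of this face means v_j0 = 0 for some j0. As l_0 a_0 = \<Sum> l_j a_j with all l_j > 0, adding
  s a_0 (s > 0) to u makes its j0-th coordinate exceed v_j0 = 0, which forces the exponent
  s_j0 < 0 and hence the factor [0]_{s_j0} = 0 in g. So G^(b)_u is the constant g^(b)_u, which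
  is nonzero exactly when u - b is a nonnegative integer combination of the a_j with v_j > 0.\<close>

definition lincomb :: "(nat \<Rightarrow> 'a::real_vector) \<Rightarrow> nat \<Rightarrow> (nat \<Rightarrow> real) \<Rightarrow> 'a" where
  "lincomb a m r = (\<Sum>j=1..m. r j *\<^sub>R a j)"

lemma lincomb_add: "lincomb a m r + lincomb a m r' = lincomb a m (\<lambda>j. r j + r' j)"
  unfolding lincomb_def by (simp add: sum.distrib scaleR_add_left)

lemma lincomb_scaleR: "c *\<^sub>R lincomb a m r = lincomb a m (\<lambda>j. c * r j)"
  unfolding lincomb_def by (simp add: scaleR_sum_right)

lemma lincomb_add_sum:
  assumes "J \<subseteq> {1..m}"
  shows "lincomb a m r + (\<Sum>j\<in>J. t j *\<^sub>R a j) = lincomb a m (\<lambda>j. r j + (if j \<in> J then t j else 0))"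
proof -
  have "(\<Sum>j=1..m. (if j \<in> J then t j else 0) *\<^sub>R a j) = (\<Sum>j=1..m. if j \<in> J then t j *\<^sub>R a j else 0)"
    by (rule sum.cong) auto
  also have "\<dots> = (\<Sum>j\<in>{1..m} \<inter> J. t j *\<^sub>R a j)"
    by (rule sum.inter_restrict[symmetric]) simp
  finally have "(\<Sum>j\<in>J. t j *\<^sub>R a j) = (\<Sum>j=1..m. (if j \<in> J then t j else 0) *\<^sub>R a j)"
    using assms by (simp add: Int_absorb1)
  then show ?thesis unfolding lincomb_def by (simp add: sum.distrib[symmetric] scaleR_add_left)
qed

lemma lincomb_indicator:
  assumes "j \<in> {1..m}"
  shows "lincomb a m (\<lambda>i. if i = j then 1 else 0) = a j"
proof -
  have "lincomb a m (\<lambda>i. if i = j then 1 else 0) = (\<Sum>i=1..m. if i = j then a j else 0)"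
    unfolding lincomb_def by (rule sum.cong) auto
  then show ?thesis using assms by (simp only: sum.delta[OF finite_atLeastAtMost]) simp
qed

text \<open>Coordinate functionals of an independent family, realised as vectors so that faces and
  closedness of the cone come from supporting hyperplanes and half-spaces.\<close>

definition dual_vec :: "(nat \<Rightarrow> 'a::euclidean_space) \<Rightarrow> nat \<Rightarrow> nat \<Rightarrow> 'a" where
  "dual_vec a m i = (SOME w. \<forall>k\<in>{1..m}. w \<bullet> a k = (if k = i then 1 else 0))"

lemma dual_vec_inner:
  fixes a :: "nat \<Rightarrow> 'a::euclidean_space"
  assumes inj: "inj_on a {1..m}" and indep: "independent (a ` {1..m})" and k: "k \<in> {1..m}"
  shows "dual_vec a m i \<bullet> a k = (if k = i then 1 else 0)"
proof -
  have "\<exists>f :: 'a \<Rightarrow> real. linear f \<and>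
      (\<forall>x\<in>a ` {1..m}. f x = (if inv_into {1..m} a x = i then 1 else 0))"
    by (rule linear_independent_extend[OF indep])
  then obtain f :: "'a \<Rightarrow> real" where f: "linear f"
    and f_a: "\<forall>x\<in>a ` {1..m}. f x = (if inv_into {1..m} a x = i then 1 else 0)"
    by blast
  define w where "w = adjoint f 1"
  have w: "w \<bullet> a k = (if k = i then 1 else 0)" if k: "k \<in> {1..m}" for k
  proof -
    have "w \<bullet> a k = f (a k)"
      using adjoint_works[OF f, of "a k" 1] by (simp add: w_def inner_commute)
    also have "\<dots> = (if k = i then 1 else 0)"
      using f_a inv_into_f_f[OF inj k] k by simp
    finally show ?thesis .
  qed
  show ?thesis unfolding dual_vec_def by (rule someI2[of _ w]) (use w k in auto)
qed

lemma dual_vec_inner_sum: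
  fixes a :: "nat \<Rightarrow> 'a::euclidean_space"
  assumes "inj_on a {1..m}" "independent (a ` {1..m})" "J \<subseteq> {1..m}" "i \<in> {1..m}"
  shows "dual_vec a m i \<bullet> (\<Sum>j\<in>J. r j *\<^sub>R a j) = (if i \<in> J then r i else 0)"
proof -
  have "dual_vec a m i \<bullet> (\<Sum>j\<in>J. r j *\<^sub>R a j) = (\<Sum>j\<in>J. if j = i then r j else 0)"
    unfolding inner_sum_right using assms dual_vec_inner[OF assms(1,2)] by (intro sum.cong) auto
  also have "\<dots> = (if i \<in> J then r i else 0)"
    using finite_subset[OF assms(3) finite_atLeastAtMost] by (simp only: sum.delta)
  finally show ?thesis .
qed

lemma dual_vec_inner_lincomb:
  fixes a :: "nat \<Rightarrow> 'a::euclidean_space"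
  assumes "inj_on a {1..m}" "independent (a ` {1..m})" "i \<in> {1..m}"
  shows "dual_vec a m i \<bullet> lincomb a m r = r i"
  using dual_vec_inner_sum[OF assms(1,2) order_refl assms(3)] assms(3) by (simp add: lincomb_def)

lemma lincomb_eq_iff:
  fixes a :: "nat \<Rightarrow> 'a::euclidean_space"
  assumes "inj_on a {1..m}" "independent (a ` {1..m})"
  shows "lincomb a m r = lincomb a m r' \<longleftrightarrow> (\<forall>i\<in>{1..m}. r i = r' i)"
proof
  assume "lincomb a m r = lincomb a m r'"
  then show "\<forall>i\<in>{1..m}. r i = r' i" by (metis dual_vec_inner_lincomb[OF assms])
next
  assume "\<forall>i\<in>{1..m}. r i = r' i"
  then show "lincomb a m r = lincomb a m r'" unfolding lincomb_def by (intro sum.cong) auto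
qed

lemma coneA_eq_lincomb: "coneA a m = {lincomb a m c | c. \<forall>j\<in>{1..m}. 0 \<le> c j}"
  unfolding coneA_def lincomb_def by auto

lemma convex_coneA: "convex (coneA a m)"
  unfolding convex_def
proof (intro ballI allI impI)
  fix x y and s t :: real
  assume "x \<in> coneA a m" "y \<in> coneA a m" "0 \<le> s" "0 \<le> t" "s + t = 1"
  then obtain c d where "\<forall>j\<in>{1..m}. 0 \<le> c j" "\<forall>j\<in>{1..m}. 0 \<le> d j"
    and "x = lincomb a m c" "y = lincomb a m d" by (auto simp: coneA_eq_lincomb)
  moreover have "s *\<^sub>R lincomb a m c + t *\<^sub>R lincomb a m d = lincomb a m (\<lambda>j. s * c j + t * d j)"
    by (simp add: lincomb_scaleR lincomb_add)
  ultimately show "s *\<^sub>R x + t *\<^sub>R y \<in> coneA a m"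
    using \<open>0 \<le> s\<close> \<open>0 \<le> t\<close> by (auto simp: coneA_eq_lincomb)
qed

lemma closed_coneA:
  fixes a :: "nat \<Rightarrow> real ^ 'n"
  assumes inj: "inj_on a {1..m}" and indep: "independent (a ` {1..m})"
  shows "closed (coneA a m)"
proof -
  have "coneA a m = span (a ` {1..m}) \<inter> (\<Inter>i\<in>{1..m}. {x. 0 \<le> dual_vec a m i \<bullet> x})"
  proof (intro equalityI subsetI)
    fix x assume "x \<in> coneA a m"
    then obtain c where x: "x = lincomb a m c" and "\<forall>j\<in>{1..m}. 0 \<le> c j" by (auto simp: coneA_eq_lincomb)
    moreover have "x \<in> span (a ` {1..m})"
      unfolding x lincomb_def by (intro span_sum span_scale span_base) auto
    ultimately show "x \<in> span (a ` {1..m}) \<inter> (\<Inter>i\<in>{1..m}. {x. 0 \<le> dual_vec a m i \<bullet> x})"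
      by (simp add: dual_vec_inner_lincomb[OF inj indep])
  next
    fix x assume x: "x \<in> span (a ` {1..m}) \<inter> (\<Inter>i\<in>{1..m}. {x. 0 \<le> dual_vec a m i \<bullet> x})"
    then obtain r where "x = (\<Sum>y\<in>a ` {1..m}. r y *\<^sub>R y)"
      using span_finite[of "a ` {1..m}"] by auto
    then have x_eq: "x = lincomb a m (r \<circ> a)"
      unfolding lincomb_def using sum.reindex[OF inj] by simp
    then show "x \<in> coneA a m"
      using x dual_vec_inner_lincomb[OF inj indep] by (auto simp: coneA_eq_lincomb)
  qed
  then show ?thesis by (simp add: closed_Int closed_span closed_INT closed_halfspace_ge)
qed

lemma face_of_convex_combination_mem:
  assumes F: "F face_of S" and xy: "x \<in> S" "y \<in> S" and e: "0 < e" "e < 1"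
    and mem: "(1 - e) *\<^sub>R x + e *\<^sub>R y \<in> F"
  shows "x \<in> F"
proof (cases "x = y")
  case True
  then show ?thesis using mem by (simp add: algebra_simps)
next
  case False
  then have "(1 - e) *\<^sub>R x + e *\<^sub>R y \<in> open_segment x y"
    using e unfolding in_segment by blast
  then show ?thesis using face_ofD[OF F _ xy mem] by blast
qed

definition support_cone :: "(nat \<Rightarrow> 'a::real_vector) \<Rightarrow> nat \<Rightarrow> (nat \<Rightarrow> real) \<Rightarrow> 'a set" where
  "support_cone a m v = {lincomb a m c | c. \<forall>j\<in>{1..m}. 0 \<le> c j \<and> (v j = 0 \<longrightarrow> c j = 0)}"

lemma support_cone_face_of:
  fixes a :: "nat \<Rightarrow> real ^ 'n"
  assumes inj: "inj_on a {1..m}" and indep: "independent (a ` {1..m})"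
  shows "support_cone a m v face_of coneA a m"
proof -
  define K where "K = {j\<in>{1..m}. v j = 0}"
  define w where "w = (\<Sum>i\<in>K. dual_vec a m i)"
  have w_lincomb: "w \<bullet> lincomb a m c = (\<Sum>i\<in>K. c i)" for c
    unfolding w_def inner_sum_left K_def using dual_vec_inner_lincomb[OF inj indep] by simp
  have "finite K" unfolding K_def by simp
  then have sum_eq_0_iff: "(\<Sum>i\<in>K. c i) = 0 \<longleftrightarrow> (\<forall>i\<in>K. c i = 0)"
    if "\<forall>j\<in>{1..m}. 0 \<le> c j" for c :: "nat \<Rightarrow> real"
    using sum_nonneg_eq_0_iff[of K c] that by (auto simp: K_def)
  have "support_cone a m v = coneA a m \<inter> {x. w \<bullet> x = 0}"
  proof (intro equalityI subsetI)
    fix x assume "x \<in> support_cone a m v"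
    then obtain c where "x = lincomb a m c" "\<forall>j\<in>{1..m}. 0 \<le> c j \<and> (v j = 0 \<longrightarrow> c j = 0)"
      unfolding support_cone_def by blast
    then show "x \<in> coneA a m \<inter> {x. w \<bullet> x = 0}"
      using sum_eq_0_iff[of c] by (auto simp: coneA_eq_lincomb w_lincomb K_def)
  next
    fix x assume "x \<in> coneA a m \<inter> {x. w \<bullet> x = 0}"
    then obtain c where "x = lincomb a m c" "\<forall>j\<in>{1..m}. 0 \<le> c j" "(\<Sum>i\<in>K. c i) = 0"
      by (auto simp: coneA_eq_lincomb w_lincomb)
    then show "x \<in> support_cone a m v"
      using sum_eq_0_iff[of c] unfolding support_cone_def by (auto simp: K_def)
  qed
  moreover have "0 \<le> w \<bullet> x" if x: "x \<in> coneA a m" for x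
  proof -
    obtain c where "x = lincomb a m c" "\<forall>j\<in>{1..m}. 0 \<le> c j"
      using x unfolding coneA_eq_lincomb by blast
    then show ?thesis by (auto simp: w_lincomb K_def intro!: sum_nonneg)
  qed
  ultimately show ?thesis
    by (simp add: face_of_Int_supporting_hyperplane_ge convex_coneA)
qed

lemma support_cone_subset_face:
  assumes F: "F face_of coneA a m" "lincomb a m v \<in> F" and v: "\<forall>j\<in>{1..m}. 0 \<le> v j"
  shows "support_cone a m v \<subseteq> F"
proof
  fix x assume "x \<in> support_cone a m v"
  then obtain c where c: "\<forall>j\<in>{1..m}. 0 \<le> c j \<and> (v j = 0 \<longrightarrow> c j = 0)" and x: "x = lincomb a m c"
    unfolding support_cone_def by blast
  define E where "E = insert (1/2) ((\<lambda>i. v i / (c i + 1)) ` {i\<in>{1..m}. v i \<noteq> 0})"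
  define e where "e = Min E"
  have E: "finite E" "E \<noteq> {}" unfolding E_def by auto
  have "0 < v i / (c i + 1)" if i: "i \<in> {1..m}" "v i \<noteq> 0" for i
  proof -
    have "0 \<le> c i" "0 \<le> v i" using c v i by auto
    then show ?thesis using i(2) by (auto intro!: divide_pos_pos)
  qed
  then have e_pos: "0 < e" unfolding e_def Min_gr_iff[OF E] by (auto simp: E_def)
  have e_lt_1: "e < 1" unfolding e_def using Min_le[OF E(1), of "1/2"] by (simp add: E_def)
  have ec: "e * c i \<le> v i" if i: "i \<in> {1..m}" for i
  proof (cases "v i = 0")
    case False
    then have "e \<le> v i / (c i + 1)" unfolding e_def using i by (intro Min_le E) (auto simp: E_def)
    then have "e * (c i + 1) \<le> v i" using c i by (simp add: pos_le_divide_eq add_nonneg_pos)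
    then show ?thesis using e_pos by (simp add: distrib_left)
  qed (use c i in simp)
  define d where "d i = (v i - e * c i) / (1 - e)" for i
  have "e *\<^sub>R lincomb a m c + (1 - e) *\<^sub>R lincomb a m d = lincomb a m v"
  proof -
    have "e * c j + (1 - e) * d j = v j" for j using e_lt_1 by (simp add: d_def)
    then show ?thesis by (simp add: lincomb_scaleR lincomb_add)
  qed
  moreover have "lincomb a m c \<in> coneA a m" "lincomb a m d \<in> coneA a m"
    using c ec e_lt_1 unfolding coneA_eq_lincomb d_def by (auto intro!: divide_nonneg_pos)
  ultimately show "x \<in> F"
    using face_of_convex_combination_mem[OF F(1), of "lincomb a m c" "lincomb a m d" "1 - e"] F(2)
      e_pos e_lt_1 x by (simp add: add.commute)
qed

lemma min_closed_face_coneA: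
  fixes a :: "nat \<Rightarrow> real ^ 'n"
  assumes inj: "inj_on a {1..m}" and indep: "independent (a ` {1..m})"
    and v: "\<forall>j\<in>{1..m}. 0 \<le> v j"
  shows "min_closed_face (coneA a m) (lincomb a m v) = support_cone a m v"
proof
  have face: "support_cone a m v face_of coneA a m"
    by (rule support_cone_face_of[OF inj indep])
  moreover have "closed (support_cone a m v)"
    by (rule face_of_imp_closed[OF convex_coneA closed_coneA[OF inj indep] face])
  moreover have "lincomb a m v \<in> support_cone a m v"
    unfolding support_cone_def using v by blast
  ultimately show "min_closed_face (coneA a m) (lincomb a m v) \<subseteq> support_cone a m v"
    unfolding min_closed_face_def by blast
next
  show "support_cone a m v \<subseteq> min_closed_face (coneA a m) (lincomb a m v)"
    unfolding min_closed_face_def using support_cone_subset_face v by blast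
qed

lemma basis_mem_support_cone_iff:
  fixes a :: "nat \<Rightarrow> 'a::euclidean_space"
  assumes inj: "inj_on a {1..m}" and indep: "independent (a ` {1..m})" and j: "j \<in> {1..m}"
  shows "a j \<in> support_cone a m v \<longleftrightarrow> v j \<noteq> 0"
proof -
  have "a j \<in> support_cone a m v \<longleftrightarrow> (\<exists>c. lincomb a m (\<lambda>i. if i = j then 1 else 0) = lincomb a m c
      \<and> (\<forall>i\<in>{1..m}. 0 \<le> c i \<and> (v i = 0 \<longrightarrow> c i = 0)))"
    unfolding support_cone_def lincomb_indicator[OF j] by blast
  also have "\<dots> \<longleftrightarrow> (\<exists>c. (\<forall>i\<in>{1..m}. (if i = j then 1 else 0) = (c i :: real))
      \<and> (\<forall>i\<in>{1..m}. 0 \<le> c i \<and> (v i = 0 \<longrightarrow> c i = 0)))"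
    by (simp only: lincomb_eq_iff[OF inj indep])
  also have "\<dots> \<longleftrightarrow> v j \<noteq> 0"
    using j by (auto intro!: exI[of _ "\<lambda>i. if i = j then 1 else 0"])
  finally show ?thesis .
qed

lemma support_cone_eq_coneA: "\<forall>j\<in>{1..m}. v j \<noteq> 0 \<Longrightarrow> support_cone a m v = coneA a m"
  unfolding support_cone_def coneA_eq_lincomb by auto

lemma sum_scaleR_coeff_unique:
  fixes a :: "nat \<Rightarrow> 'a::euclidean_space"
  assumes "inj_on a {1..m}" "independent (a ` {1..m})" "J \<subseteq> {1..m}"
    and "(\<Sum>j\<in>J. r j *\<^sub>R a j) = (\<Sum>j\<in>J. r' j *\<^sub>R a j)" "i \<in> J"
  shows "r i = r' i"
  using dual_vec_inner_sum[OF assms(1-3), of i] assms(3-5) by (metis subsetD)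

lemma bracket_0_neg: "k < 0 \<Longrightarrow> bracket 0 k = 0"
  unfolding bracket_def by (auto intro!: bexI[of _ 0])

lemma bracket_neg_nonzero:
  assumes "0 < x" "k \<le> 0"
  shows "bracket (- complex_of_real x) k \<noteq> 0"
proof -
  have "- complex_of_real x - of_nat i \<noteq> 0" for i
  proof
    assume "- complex_of_real x - of_nat i = 0"
    then have "Re (- complex_of_real x - of_nat i) = 0" by simp
    then show False using assms(1) by simp
  qed
  then show ?thesis using assms(2) unfolding bracket_def by auto
qed

lemma prod_powi_bracket_nonzero:
  assumes "finite J" "\<forall>j\<in>J. 0 < l j" "\<forall>j\<in>J. 0 < v j"
  shows "(\<Prod>j\<in>J. (of_nat (l j) :: complex) powi (- int (t j)))
    * (\<Prod>j\<in>J. bracket (- complex_of_real (v j)) (- int (t j))) \<noteq> 0"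
  using assms by (auto simp: prod_zero_iff bracket_neg_nonzero)

lemma gcoef_lincomb:
  fixes a :: "nat \<Rightarrow> real ^ 'n"
  assumes inj: "inj_on a {1..m}" and indep: "independent (a ` {1..m})"
    and s: "\<forall>j\<in>{1..m}. s j \<le> 0"
  shows "gcoef a m l v (lincomb a m (\<lambda>j. v j - of_int (s j)))
    = (\<Prod>j=1..m. bracket (- complex_of_real (v j)) (s j) * of_nat (l j) powi s j)"
proof -
  define P where "P s' \<longleftrightarrow> (\<forall>j\<in>{1..m}. s' j \<le> 0) \<and>
      lincomb a m (\<lambda>j. v j - of_int (s j)) = lincomb a m (\<lambda>j. v j - of_int (s' j))" for s'
  have "P s" using s unfolding P_def by simp
  then have "P (Eps P)" by (rule someI[of P s])
  then have "\<forall>j\<in>{1..m}. Eps P j = s j"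
    unfolding P_def lincomb_eq_iff[OF inj indep] by simp
  then have "(let s' = Eps P in
      \<Prod>j=1..m. bracket (- complex_of_real (v j)) (s' j) * of_nat (l j) powi s' j)
    = (\<Prod>j=1..m. bracket (- complex_of_real (v j)) (s j) * of_nat (l j) powi s j)"
    unfolding Let_def by (intro prod.cong) auto
  then show ?thesis using \<open>P s\<close> unfolding gcoef_def P_def lincomb_def by auto
qed

lemma gcoef_eq_0_if_inner_dual_vec_pos:
  fixes a :: "nat \<Rightarrow> real ^ 'n"
  assumes inj: "inj_on a {1..m}" and indep: "independent (a ` {1..m})"
    and j: "j \<in> {1..m}" "v j = 0" and pos: "0 < dual_vec a m j \<bullet> w"
  shows "gcoef a m l v w = 0"
proof (cases "\<exists>s. (\<forall>j\<in>{1..m}. s j \<le> 0) \<and> w = lincomb a m (\<lambda>j. v j - of_int (s j))")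
  case True
  then obtain s where s: "\<forall>j\<in>{1..m}. s j \<le> 0" and w: "w = lincomb a m (\<lambda>j. v j - of_int (s j))"
    by blast
  have "s j < 0" using pos j unfolding w dual_vec_inner_lincomb[OF inj indep j(1)] by simp
  then have "bracket (- complex_of_real (v j)) (s j) = 0" using j(2) by (simp add: bracket_0_neg)
  then show ?thesis unfolding w gcoef_lincomb[OF inj indep s] using j(1) by (intro prod_zero) auto
next
  case False
  then show ?thesis unfolding gcoef_def lincomb_def by auto
qed

lemma gcoef_add_sum:
  fixes a :: "nat \<Rightarrow> real ^ 'n"
  assumes inj: "inj_on a {1..m}" and indep: "independent (a ` {1..m})" and J: "J \<subseteq> {1..m}"
  shows "gcoef a m l v (lincomb a m v + (\<Sum>j\<in>J. of_nat (t j) *\<^sub>R a j))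
    = (\<Prod>j\<in>J. of_nat (l j) powi (- int (t j))) * (\<Prod>j\<in>J. bracket (- complex_of_real (v j)) (- int (t j)))"
proof -
  define s where "s j = (if j \<in> J then - int (t j) else 0)" for j
  have "lincomb a m v + (\<Sum>j\<in>J. of_nat (t j) *\<^sub>R a j) = lincomb a m (\<lambda>j. v j - of_int (s j))"
    unfolding lincomb_add_sum[OF J] by (intro arg_cong[where f = "lincomb a m"] ext) (simp add: s_def)
  moreover have "\<forall>j\<in>{1..m}. s j \<le> 0" by (simp add: s_def)
  ultimately have "gcoef a m l v (lincomb a m v + (\<Sum>j\<in>J. of_nat (t j) *\<^sub>R a j))
      = (\<Prod>j=1..m. bracket (- complex_of_real (v j)) (s j) * of_nat (l j) powi s j)"
    using gcoef_lincomb[OF inj indep] by simp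
  also have "\<dots> = (\<Prod>j\<in>J. bracket (- complex_of_real (v j)) (s j) * of_nat (l j) powi s j)"
    by (rule prod.mono_neutral_right[OF finite_atLeastAtMost J]) (auto simp: s_def bracket_def)
  also have "\<dots> = (\<Prod>j\<in>J. of_nat (l j) powi (- int (t j))) * (\<Prod>j\<in>J. bracket (- complex_of_real (v j)) (- int (t j)))"
    by (simp add: s_def prod.distrib mult.commute)
  finally show ?thesis .
qed

lemma gcoef_eq_0_if_not_add_sum:
  fixes a :: "nat \<Rightarrow> real ^ 'n"
  assumes inj: "inj_on a {1..m}" and indep: "independent (a ` {1..m})"
    and J: "J = {j\<in>{1..m}. v j \<noteq> 0}"
    and w: "\<nexists>t::nat \<Rightarrow> nat. w = lincomb a m v + (\<Sum>j\<in>J. of_nat (t j) *\<^sub>R a j)"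
  shows "gcoef a m l v w = 0"
proof (cases "\<exists>s. (\<forall>j\<in>{1..m}. s j \<le> 0) \<and> w = lincomb a m (\<lambda>j. v j - of_int (s j))")
  case True
  then obtain s where s: "\<forall>j\<in>{1..m}. s j \<le> 0" and w_eq: "w = lincomb a m (\<lambda>j. v j - of_int (s j))"
    by blast
  show ?thesis
  proof (cases "\<exists>j\<in>{1..m}. v j = 0 \<and> s j < 0")
    case True
    then obtain j where j: "j \<in> {1..m}" "v j = 0" "s j < 0" by blast
    then have "0 < dual_vec a m j \<bullet> w" unfolding w_eq dual_vec_inner_lincomb[OF inj indep j(1)] by simp
    with j show ?thesis by (intro gcoef_eq_0_if_inner_dual_vec_pos[OF inj indep])
  next
    case False
    have "v j - of_int (s j) = v j + (if j \<in> J then of_nat (nat (- s j)) else 0)"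
      if j: "j \<in> {1..m}" for j
    proof -
      have "v j = 0 \<Longrightarrow> s j = 0" using s False j by force
      then show ?thesis using s j by (auto simp: J of_nat_nat)
    qed
    moreover have J_sub: "J \<subseteq> {1..m}" using J by auto
    ultimately have "w = lincomb a m v + (\<Sum>j\<in>J. of_nat (nat (- s j)) *\<^sub>R a j)"
      unfolding w_eq lincomb_add_sum[OF J_sub] lincomb_eq_iff[OF inj indep] by blast
    then have "\<exists>t::nat \<Rightarrow> nat. w = lincomb a m v + (\<Sum>j\<in>J. of_nat (t j) *\<^sub>R a j)"
      by (rule exI[of _ "\<lambda>j. nat (- s j)"])
    with w show ?thesis by blast
  qed
next
  case False
  then show ?thesis unfolding gcoef_def lincomb_def by auto
qed

lemma gcoef_eq_0_iff:
  fixes a :: "nat \<Rightarrow> real ^ 'n"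
  assumes inj: "inj_on a {1..m}" and indep: "independent (a ` {1..m})"
    and v: "\<forall>j\<in>{1..m}. 0 \<le> v j" and l: "\<forall>j\<in>{1..m}. 0 < l j"
    and J: "J = {j\<in>{1..m}. v j \<noteq> 0}"
  shows "gcoef a m l v w = 0
    \<longleftrightarrow> (\<nexists>t::nat \<Rightarrow> nat. w = lincomb a m v + (\<Sum>j\<in>J. of_nat (t j) *\<^sub>R a j))"
proof
  assume zero: "gcoef a m l v w = 0"
  have J_sub: "J \<subseteq> {1..m}" using J by auto
  have J_pos: "\<forall>j\<in>J. 0 < v j" using v J by (auto simp: less_le)
  show "\<nexists>t::nat \<Rightarrow> nat. w = lincomb a m v + (\<Sum>j\<in>J. of_nat (t j) *\<^sub>R a j)"
  proof
    assume "\<exists>t::nat \<Rightarrow> nat. w = lincomb a m v + (\<Sum>j\<in>J. of_nat (t j) *\<^sub>R a j)"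
    then obtain t :: "nat \<Rightarrow> nat" where w: "w = lincomb a m v + (\<Sum>j\<in>J. of_nat (t j) *\<^sub>R a j)"
      by blast
    have "gcoef a m l v w \<noteq> 0" unfolding w gcoef_add_sum[OF inj indep J_sub]
      by (rule prod_powi_bracket_nonzero) (use finite_subset[OF J_sub] l J_sub J_pos in auto)
    with zero show False by simp
  qed
qed (rule gcoef_eq_0_if_not_add_sum[OF inj indep J])

lemma fps_const_eq_fps_const_iff: "fps_const c = fps_const d \<longleftrightarrow> c = d"
  by (auto dest: arg_cong[where f = "\<lambda>f. f $ 0"])

lemma Gser_eq_fps_const:
  assumes "\<forall>n>0. gcoef a m l v (u + of_nat n *\<^sub>R a 0) = 0"
  shows "Gser a m l v u = fps_const (gcoef a m l v u)"
proof (rule fps_ext)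
  fix n
  show "fps_nth (Gser a m l v u) n = fps_nth (fps_const (gcoef a m l v u)) n"
    using assms unfolding Gser_def by (cases "n = 0") auto
qed

lemma Gser_eq_fps_const_gcoef:
  fixes a :: "nat \<Rightarrow> real ^ 'n"
  assumes inj: "inj_on a {1..m}" and indep: "independent (a ` {1..m})"
    and j0: "j0 \<in> {1..m}" "v j0 = 0" and u: "u \<in> coneA a m"
    and l_pos: "0 < l 0" "0 < l j0" and l_rel: "of_nat (l 0) *\<^sub>R a 0 = (\<Sum>j=1..m. of_nat (l j) *\<^sub>R a j)"
  shows "Gser a m l v u = fps_const (gcoef a m l v u)"
proof (rule Gser_eq_fps_const, intro allI impI)
  fix n :: nat assume "0 < n"
  obtain c where c: "\<forall>j\<in>{1..m}. 0 \<le> c j" and u_eq: "u = lincomb a m c"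
    using u unfolding coneA_eq_lincomb by blast
  have "real (l 0) * (dual_vec a m j0 \<bullet> a 0) = real (l j0)"
    using arg_cong[OF l_rel, of "\<lambda>x. dual_vec a m j0 \<bullet> x"]
      dual_vec_inner_sum[OF inj indep order_refl j0(1)] j0(1) by simp
  then have "0 < real (l 0) * (dual_vec a m j0 \<bullet> a 0)" using l_pos by simp
  then have "0 < dual_vec a m j0 \<bullet> a 0" using l_pos by (simp add: zero_less_mult_iff)
  then have "0 < dual_vec a m j0 \<bullet> (u + of_nat n *\<^sub>R a 0)"
    using c j0 \<open>0 < n\<close> by (simp add: u_eq inner_add_right dual_vec_inner_lincomb[OF inj indep] add_nonneg_pos)
  then show "gcoef a m l v (u + of_nat n *\<^sub>R a 0) = 0"
    using gcoef_eq_0_if_inner_dual_vec_pos[where v = v, OF inj indep j0] by blast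
qed

theorem corollary4p16:
  fixes a :: "nat \<Rightarrow> real ^ 'n" and m :: nat and l :: "nat \<Rightarrow> nat"
    and v :: "nat \<Rightarrow> real" and b u :: "real ^ 'n"
  assumes a_int: "\<forall>j\<in>{0..m}. int_vec (a j)"
    and a_inj: "inj_on a {1..m}"
    and a_indep: "independent (a ` {1..m})"
    and l_pos: "\<forall>j\<in>{0..m}. l j > 0"
    and l_gcd: "Gcd (l ` {0..m}) = 1"
    and l_rel: "of_nat (l 0) *\<^sub>R a 0 = (\<Sum>j=1..m. of_nat (l j) *\<^sub>R a j)"
    and l_sum: "l 0 = (\<Sum>j=1..m. l j)"
    and v_range: "\<forall>j\<in>{1..m}. 0 \<le> v j \<and> v j < 1"
    and b_def: "b = (\<Sum>j=1..m. v j *\<^sub>R a j)"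
    and b_int: "int_vec b"
    and u_M: "u \<in> MA a m"
    and u_b: "u - b \<in> ZAplus a m"
    and face_proper: "min_closed_face (coneA a m) b \<noteq> coneA a m"
  defines "J \<equiv> {j\<in>{1..m}. a j \<in> min_closed_face (coneA a m) b}"
  shows "((\<exists>c. c \<noteq> 0 \<and> Gser a m l v u = fps_const c)
            \<longleftrightarrow> (\<exists>t::nat \<Rightarrow> nat. u = b + (\<Sum>j\<in>J. of_nat (t j) *\<^sub>R a j)))
      \<and> (\<forall>t t'::nat \<Rightarrow> nat. u = b + (\<Sum>j\<in>J. of_nat (t j) *\<^sub>R a j)
            \<longrightarrow> u = b + (\<Sum>j\<in>J. of_nat (t' j) *\<^sub>R a j) \<longrightarrow> (\<forall>j\<in>J. t j = t' j))
      \<and> (\<forall>t::nat \<Rightarrow> nat. u = b + (\<Sum>j\<in>J. of_nat (t j) *\<^sub>R a j)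
            \<longrightarrow> Gser a m l v u = fps_const
                 ((\<Prod>j\<in>J. (of_nat (l j)) powi (- int (t j)))
                  * (\<Prod>j\<in>J. bracket (- complex_of_real (v j)) (- int (t j)))))
      \<and> ((\<nexists>t::nat \<Rightarrow> nat. u = b + (\<Sum>j\<in>J. of_nat (t j) *\<^sub>R a j))
            \<longrightarrow> Gser a m l v u = 0)"
proof -
  have v_nonneg: "\<forall>j\<in>{1..m}. 0 \<le> v j" using v_range by blast
  have b_eq: "b = lincomb a m v" unfolding b_def lincomb_def ..
  have face: "min_closed_face (coneA a m) b = support_cone a m v"
    unfolding b_eq by (rule min_closed_face_coneA[OF a_inj a_indep v_nonneg])
  have J_eq: "J = {j\<in>{1..m}. v j \<noteq> 0}"
    unfolding J_def face using basis_mem_support_cone_iff[OF a_inj a_indep] by auto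
  then have J_sub: "J \<subseteq> {1..m}" by auto
  obtain j0 where j0: "j0 \<in> {1..m}" "v j0 = 0"
    using face_proper support_cone_eq_coneA unfolding face by blast
  have G: "Gser a m l v u = fps_const (gcoef a m l v u)"
    using u_M l_pos j0(1) unfolding MA_def
    by (intro Gser_eq_fps_const_gcoef[where v = v, OF a_inj a_indep j0 _ _ _ l_rel]) auto
  have zero_iff: "gcoef a m l v u = 0
      \<longleftrightarrow> (\<nexists>t::nat \<Rightarrow> nat. u = b + (\<Sum>j\<in>J. of_nat (t j) *\<^sub>R a j))"
    unfolding b_eq using l_pos by (intro gcoef_eq_0_iff[OF a_inj a_indep v_nonneg _ J_eq]) auto
  show ?thesis
  proof (intro conjI allI impI)
    show "(\<exists>c. c \<noteq> 0 \<and> Gser a m l v u = fps_const c)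
      \<longleftrightarrow> (\<exists>t::nat \<Rightarrow> nat. u = b + (\<Sum>j\<in>J. of_nat (t j) *\<^sub>R a j))"
      unfolding G fps_const_eq_fps_const_iff using zero_iff by blast
  next
    fix t t' :: "nat \<Rightarrow> nat"
    assume "u = b + (\<Sum>j\<in>J. of_nat (t j) *\<^sub>R a j)" "u = b + (\<Sum>j\<in>J. of_nat (t' j) *\<^sub>R a j)"
    then have "(\<Sum>j\<in>J. of_nat (t j) *\<^sub>R a j) = (\<Sum>j\<in>J. of_nat (t' j) *\<^sub>R a j)" by simp
    then show "\<forall>j\<in>J. t j = t' j" by (auto dest: sum_scaleR_coeff_unique[OF a_inj a_indep J_sub])
  next
    fix t :: "nat \<Rightarrow> nat"
    assume "u = b + (\<Sum>j\<in>J. of_nat (t j) *\<^sub>R a j)"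
    then show "Gser a m l v u = fps_const ((\<Prod>j\<in>J. of_nat (l j) powi (- int (t j)))
        * (\<Prod>j\<in>J. bracket (- complex_of_real (v j)) (- int (t j))))"
      unfolding G b_eq by (simp add: gcoef_add_sum[OF a_inj a_indep J_sub])
  next
    assume "\<nexists>t::nat \<Rightarrow> nat. u = b + (\<Sum>j\<in>J. of_nat (t j) *\<^sub>R a j)"
    then show "Gser a m l v u = 0" unfolding G using zero_iff by simp
  qed
qed

end
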